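(* Let $q\in[u]$ be a key and $\ell\ge0$ an integer. If the run containing position $h(q)$ has length $r\in[2^{\ell+2},2^{\ell+3})$, then at least one of the following (at most 12) consecutive $\ell$-intervals is near-full: the $\ell$-interval containing $h(q)$, the 8 nearest $\ell$-intervals to its left, and the 3 nearest $\ell$-intervals to its right.
   Context: Let $[s]=\{0,\dots,s-1\}$. Linear probing: fix a table size $t$ and a hash function $h:[u]\to[t]$. Positions are indexed by nonnegative integers (wrap-around is ignored, so positions beyond $t-1$ may be used), each either empty or holding one key. Starting from an empty table, the keys of a set $S\subseteq[u]$ are inserted one by one; a key $x$ is inserted by scanning positions $h(x),h(x)+1,\dots$ and placing $x$ in the first empty one. A run is a maximal interval of consecutive filled positions. For an integer $\ell\ge 0$, an $\ell$-interval is a set of positions $[i2^\ell,(i+1)2^\ell)$ for an integer $i\ge 0$. Given a query key $q\in[u]$ (which may or may not belong to $S$), an $\ell$-interval $I$ is called near-full if at least $\frac34 2^\ell$ keys $x\in S\setminus\{q\}$ satisfy $h(x)\in I$. *)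

theory Defs
  imports Complex_Main
begin

text \<open>Linear probing without wrap-around. A table state is the set of filled positions
  (positions are natural numbers).\<close>

definition first_empty :: "nat set \<Rightarrow> nat \<Rightarrow> nat" where
  "first_empty F s = (LEAST p. s \<le> p \<and> p \<notin> F)"

definition filled :: "(nat \<Rightarrow> nat) \<Rightarrow> nat list \<Rightarrow> nat set" where
  "filled h xs = foldl (\<lambda>F x. insert (first_empty F (h x)) F) {} xs"

definition is_run :: "nat set \<Rightarrow> nat \<Rightarrow> nat \<Rightarrow> bool" where
  "is_run F a b \<longleftrightarrow> a < b \<and> {a..<b} \<subseteq> F \<and> (a = 0 \<or> a - 1 \<notin> F) \<and> b \<notin> F"

definition l_interval :: "nat \<Rightarrow> nat \<Rightarrow> nat set" where
  "l_interval l i = {i * 2^l ..< (i + 1) * 2^l}"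

definition near_full :: "(nat \<Rightarrow> nat) \<Rightarrow> nat set \<Rightarrow> nat \<Rightarrow> nat \<Rightarrow> nat set \<Rightarrow> bool" where
  "near_full h S q l I \<longleftrightarrow> real (card {x \<in> S - {q}. h x \<in> I}) \<ge> 3 / 4 * 2 ^ l"

end

theory Submission
  imports Defs
begin

text \<open>Every filled position holds a key that was hashed at or before it and found
  all positions in between filled; a key placed inside a run therefore hashed inside that run,
  as the run is preceded by an empty position. So the first p - a positions of a run starting
  at a are occupied by p - a keys hashing into them. Taking p = (a div 2^l + 4) 2^l, at least
  3 2^l + 1 keys hash into the four l-intervals starting with the one containing a; ignoring q,
  at least 3 2^l remain and one of the four intervals receives 3/4 of its size. These intervals
  lie within the stated window around h q because the run has length less than 2^(l+3).\<close>

lemma finite_filled: "finite (filled h xs)"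
  unfolding filled_def by (induction xs rule: rev_induct) auto

lemma filled_snoc: "filled h (xs @ [x]) = insert (first_empty (filled h xs) (h x)) (filled h xs)"
  by (simp add: filled_def)

lemma
  assumes "finite F"
  shows first_empty_ge: "s \<le> first_empty F s"
    and first_empty_notin: "first_empty F s \<notin> F"
    and first_empty_gap_filled: "{s..<first_empty F s} \<subseteq> F"
proof -
  obtain p where "p \<notin> F \<union> {..<s}"
    using ex_new_if_finite[OF infinite_UNIV_nat] assms by blast
  then have p: "s \<le> p" "p \<notin> F" by auto
  have "s \<le> first_empty F s \<and> first_empty F s \<notin> F"
    unfolding first_empty_def by (rule LeastI[of _ p]) (use p in auto)
  then show "s \<le> first_empty F s" "first_empty F s \<notin> F" by auto
  show "{s..<first_empty F s} \<subseteq> F"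
    unfolding first_empty_def using not_less_Least by fastforce
qed

text \<open>P x is the position in which key x ends up.\<close>

definition probe_placement :: "(nat \<Rightarrow> nat) \<Rightarrow> nat set \<Rightarrow> nat set \<Rightarrow> (nat \<Rightarrow> nat) \<Rightarrow> bool" where
  "probe_placement h K F P \<longleftrightarrow> P ` K = F \<and> inj_on P K \<and>
     (\<forall>x\<in>K. h x \<le> P x \<and> {h x..<P x} \<subseteq> F)"

lemma probe_placement_filled:
  assumes "distinct xs"
  shows "\<exists>P. probe_placement h (set xs) (filled h xs) P"
  using assms
proof (induction xs rule: rev_induct)
  case Nil
  show ?case by (simp add: probe_placement_def filled_def)
next
  case (snoc x xs)
  then obtain P where P: "probe_placement h (set xs) (filled h xs) P" by auto
  define F where "F = filled h xs"
  define p where "p = first_empty F (h x)"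
  have fin: "finite F" unfolding F_def by (rule finite_filled)
  have x_new: "x \<notin> set xs" using snoc.prems by simp
  have p_free: "p \<notin> F" and p_ge: "h x \<le> p" and gap: "{h x..<p} \<subseteq> F"
    unfolding p_def using first_empty_notin[OF fin] first_empty_ge[OF fin]
      first_empty_gap_filled[OF fin] by auto
  have "\<And>y. y \<in> set xs \<Longrightarrow> (P(x := p)) y = P y" using x_new by auto
  then have P_xs: "P(x := p) ` set xs = F" "inj_on (P(x := p)) (set xs)"
    using P unfolding probe_placement_def F_def
    by (simp_all cong: image_cong inj_on_cong)
  then have "inj_on (P(x := p)) (insert x (set xs))"
    using p_free x_new by simp
  moreover have "P(x := p) ` insert x (set xs) = insert p F"
    using P_xs(1) by (simp only: image_insert fun_upd_same)
  moreover have "\<forall>y\<in>insert x (set xs). h y \<le> (P(x := p)) y \<and> {h y..<(P(x := p)) y} \<subseteq> insert p F"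
    using P x_new p_ge gap unfolding probe_placement_def F_def by auto
  ultimately have "probe_placement h (set (xs @ [x])) (insert p F) (P(x := p))"
    unfolding probe_placement_def by simp
  then show ?case unfolding filled_snoc F_def p_def by blast
qed

text \<open>A key placed in [a,p) cannot have hashed before a: the empty position a - 1 would lie
  in its probe sequence.\<close>

lemma run_prefix_le_card_hashed:
  assumes "distinct xs"
    and filled: "{a..<p} \<subseteq> filled h xs"
    and left_end: "a = 0 \<or> a - 1 \<notin> filled h xs"
  shows "p - a \<le> card {x \<in> set xs. h x \<in> {a..<p}}"
proof -
  obtain P where P: "probe_placement h (set xs) (filled h xs) P"
    using probe_placement_filled[OF assms(1)] by blast
  define K where "K = {x \<in> set xs. P x \<in> {a..<p}}"
  have "P ` K = {a..<p}"
  proof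
    show "P ` K \<subseteq> {a..<p}" unfolding K_def by auto
    have "{a..<p} \<subseteq> P ` set xs" using P filled unfolding probe_placement_def by blast
    then show "{a..<p} \<subseteq> P ` K" unfolding K_def by auto
  qed
  moreover have "inj_on P K"
    using P unfolding K_def probe_placement_def by (auto intro: inj_on_subset)
  ultimately have card_K: "card K = p - a"
    by (metis card_atLeastLessThan card_image)
  have "K \<subseteq> {x \<in> set xs. h x \<in> {a..<p}}"
  proof
    fix x assume "x \<in> K"
    then have x: "x \<in> set xs" "a \<le> P x" "P x < p" unfolding K_def by auto
    then have probe: "h x \<le> P x" "{h x..<P x} \<subseteq> filled h xs"
      using P unfolding probe_placement_def by auto
    have "a \<le> h x"
    proof (rule ccontr)
      assume "\<not> a \<le> h x"
      then have "a - 1 \<in> {h x..<P x}" using x by auto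
      then show False using left_end probe \<open>\<not> a \<le> h x\<close> by auto
    qed
    then show "x \<in> {x \<in> set xs. h x \<in> {a..<p}}" using x probe by auto
  qed
  then have "card K \<le> card {x \<in> set xs. h x \<in> {a..<p}}"
    by (intro card_mono) auto
  then show ?thesis using card_K by simp
qed

lemma div_mem_atLeastLessThan:
  fixes y n :: nat
  assumes "i * n \<le> y" "y < j * n"
  shows "y div n \<in> {i..<j}"
proof -
  have "n > 0" using assms by (cases n) auto
  then show ?thesis
    using assms by (simp add: less_eq_div_iff_mult_less_eq div_less_iff_less_mult)
qed

lemma mem_l_interval_iff: "y \<in> l_interval l k \<longleftrightarrow> y div 2 ^ l = k"
proof
  assume "y \<in> l_interval l k"
  then show "y div 2 ^ l = k"
    by (intro div_nat_eqI) (auto simp: l_interval_def mult.commute)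
next
  assume "y div 2 ^ l = k"
  then show "y \<in> l_interval l k"
    using div_times_less_eq_dividend[of y "2 ^ l"] dividend_less_div_times[of "2 ^ l" y]
    by (auto simp: l_interval_def)
qed

lemma near_full_pigeonhole:
  assumes "finite S" "m > 0"
    and many: "real m * (3 / 4 * 2 ^ l)
                 \<le> real (card {x \<in> S - {q}. h x div 2 ^ l \<in> {i..<i + m}})"
  obtains k where "k \<in> {i..<i + m}" "near_full h S q l (l_interval l k)"
proof -
  define A where "A k = {x \<in> S - {q}. h x \<in> l_interval l k}" for k
  have "{x \<in> S - {q}. h x div 2 ^ l \<in> {i..<i + m}} = (\<Union>k\<in>{i..<i + m}. A k)"
    unfolding A_def mem_l_interval_iff by blast
  then have "card {x \<in> S - {q}. h x div 2 ^ l \<in> {i..<i + m}} \<le> (\<Sum>k\<in>{i..<i + m}. card (A k))"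
    using card_UN_le[of "{i..<i + m}" A] by simp
  then have sum_ge: "real m * (3 / 4 * 2 ^ l) \<le> (\<Sum>k\<in>{i..<i + m}. real (card (A k)))"
    using many unfolding of_nat_sum[symmetric] of_nat_le_iff[symmetric, where 'a = real]
    by (rule order_trans[rotated])
  have "\<exists>k\<in>{i..<i + m}. 3 / 4 * 2 ^ l \<le> real (card (A k))"
  proof (rule ccontr)
    assume "\<not> ?thesis"
    then have "\<And>k. k \<in> {i..<i + m} \<Longrightarrow> real (card (A k)) < 3 / 4 * 2 ^ l"
      by (simp add: not_le)
    then have "(\<Sum>k\<in>{i..<i + m}. real (card (A k))) < real (card {i..<i + m}) * (3 / 4 * 2 ^ l)"
      using \<open>m > 0\<close> by (intro sum_bounded_above_strict) auto
    then show False using sum_ge by simp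
  qed
  then show ?thesis using that unfolding near_full_def A_def by blast
qed

lemma run_start_blocks_card_hashed:
  assumes "distinct xs" "is_run (filled h xs) a b" "4 * 2 ^ l \<le> b - a"
  shows "3 * 2 ^ l \<le> card {x \<in> set xs - {q}. h x div 2 ^ l \<in> {a div 2 ^ l..<a div 2 ^ l + 4}}"
proof -
  define L :: nat where "L = 2 ^ l"
  define i where "i = a div L"
  define p where "p = (i + 4) * L"
  define B where "B = {x \<in> set xs - {q}. h x div L \<in> {i..<i + 4}}"
  have a_block: "i * L \<le> a" "a < (i + 1) * L"
    unfolding i_def L_def using div_times_less_eq_dividend dividend_less_div_times by simp_all
  have "p \<le> b" using a_block assms(3) unfolding p_def L_def by (simp add: algebra_simps)
  then have "{a..<p} \<subseteq> filled h xs" "a = 0 \<or> a - 1 \<notin> filled h xs"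
    using assms(2) unfolding is_run_def by auto
  then have "p - a \<le> card {x \<in> set xs. h x \<in> {a..<p}}"
    by (rule run_prefix_le_card_hashed[OF assms(1)])
  also have "\<dots> \<le> card (insert q B)"
  proof (rule card_mono)
    have "h y div L \<in> {i..<i + 4}" if "h y \<in> {a..<p}" for y
      using that a_block unfolding p_def by (intro div_mem_atLeastLessThan) auto
    then show "{x \<in> set xs. h x \<in> {a..<p}} \<subseteq> insert q B" unfolding B_def by blast
  qed (simp add: B_def)
  also have "\<dots> \<le> card B + 1"
    unfolding B_def by (simp add: card_insert_if)
  finally show ?thesis
    using a_block unfolding B_def p_def i_def L_def by (simp add: algebra_simps)
qed

theorem lemma3:
  fixes u t :: nat and h :: "nat \<Rightarrow> nat" and xs :: "nat list" and S :: "nat set"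
    and q l a b :: nat
  assumes hash: "\<forall>x<u. h x < t"
    and order: "distinct xs" "set xs = S"
    and keys: "S \<subseteq> {..<u}"
    and query: "q < u"
    and run: "is_run (filled h xs) a b" "a \<le> h q" "h q < b"
    and len: "2 ^ (l + 2) \<le> b - a" "b - a < 2 ^ (l + 3)"
  shows "\<exists>j. h q div 2 ^ l \<le> j + 8 \<and> j \<le> h q div 2 ^ l + 3
             \<and> near_full h S q l (l_interval l j)"
proof -
  define i where "i = a div 2 ^ l"
  have run_len: "4 * 2 ^ l \<le> b - a" "b - a < 8 * 2 ^ l"
    using len by (simp_all add: power_add)
  have many: "3 * 2 ^ l \<le> card {x \<in> S - {q}. h x div 2 ^ l \<in> {i..<i + 4}}"
    using run_start_blocks_card_hashed[OF order(1) run(1) run_len(1)] order(2)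
    unfolding i_def by simp
  have "real 4 * (3 / 4 * 2 ^ l) \<le> real (card {x \<in> S - {q}. h x div 2 ^ l \<in> {i..<i + 4}})"
    using of_nat_mono[OF many, where 'a = real] by simp
  then obtain k where k: "k \<in> {i..<i + 4}" "near_full h S q l (l_interval l k)"
    using near_full_pigeonhole[OF _ zero_less_numeral] order(2) by blast
  have "i * 2 ^ l \<le> a" "h q < (i + 9) * 2 ^ l"
    using run(3) run_len dividend_less_div_times[of "2 ^ l" a] div_times_less_eq_dividend[of a "2 ^ l"]
    unfolding i_def by (simp_all add: algebra_simps)
  then have "h q div 2 ^ l \<in> {i..<i + 9}"
    using run(2) by (intro div_mem_atLeastLessThan) auto
  then show ?thesis using k by (intro exI[of _ k]) auto
qed

end
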